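(* Consider 35 labels arranged in the left-to-right order $g_0,g_1,r_0,r_1,b_0,b_1,g_2,g_3,g_4,m_0,m_1,g_5,g_6,m_2,m_3,m_4,b_2,b_3,b_4,r_2,r_3,r_4,y_0,y_1,r_5,r_6,y_2,y_3,y_4,b_5,b_6,m_5,m_6,y_5,y_6$, and assign to them any 35 real numbers (their $x$-coordinates) that are strictly increasing in this order. For a color $c\in\{g,r,b,m,y\}$ and $0\le i<j\le 6$, let $d^c_{i,j}$ denote the absolute difference of the $x$-coordinates of $c_i$ and $c_j$. Then there is at least one color $c\in\{g,r,b,m,y\}$ such that $$d^c_{0,1}d^c_{2,3}d^c_{3,4}d^c_{5,6}>d^c_{1,2}d^c_{4,5}d^c_{0,3}d^c_{3,6}$$ does not hold. *)

theory Defs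
  imports Complex_Main
begin

datatype color = G | R | B | M | Y

type_synonym label = "color \<times> nat"

definition label_order :: "label list" where
  "label_order =
    [(G,0),(G,1),(R,0),(R,1),(B,0),(B,1),(G,2),(G,3),(G,4),(M,0),(M,1),(G,5),(G,6),
     (M,2),(M,3),(M,4),(B,2),(B,3),(B,4),(R,2),(R,3),(R,4),(Y,0),(Y,1),(R,5),(R,6),
     (Y,2),(Y,3),(Y,4),(B,5),(B,6),(M,5),(M,6),(Y,5),(Y,6)]"

definition dist_c :: "(label \<Rightarrow> real) \<Rightarrow> color \<Rightarrow> nat \<Rightarrow> nat \<Rightarrow> real" where
  "dist_c x c i j = \<bar>x (c, i) - x (c, j)\<bar>"

end

theory Submission
  imports Defs
begin

(* If all five inequalities held, multiplying them would give
   (product of the 20 gaps d01, d23, d34, d56) > (product of the 20 gaps d12, d45, d03, d36),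
   both products taken over all five colours. But the interleaving of the labels lets one pair
   the gaps of the first kind bijectively with those of the second kind so that each gap is
   contained in its partner, and then the first product is at most the second. *)

fun position :: "'a list \<Rightarrow> 'a \<Rightarrow> nat" where
  "position [] a = 0"
| "position (b # bs) a = (if a = b then 0 else Suc (position bs a))"

lemma in_set_iff_position_less_length: "a \<in> set xs \<longleftrightarrow> position xs a < length xs"
  by (induction xs) auto

lemma nth_position: "a \<in> set xs \<Longrightarrow> xs ! position xs a = a"
  by (induction xs) auto

lemma le_if_position_le:
  fixes x :: "'a \<Rightarrow> 'b::order"
  assumes sorted: "sorted_wrt (\<lambda>a b. x a < x b) xs"
    and a: "a \<in> set xs" and b: "b \<in> set xs" and le: "position xs a \<le> position xs b"
  shows "x a \<le> x b"
proof (cases "position xs a = position xs b")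
  case True
  then have "a = b" using a b by (metis nth_position)
  then show ?thesis by simp
next
  case False
  then have "x (xs ! position xs a) < x (xs ! position xs b)"
    using le b by (intro sorted_wrt_nth_less[OF sorted]) (simp_all add: in_set_iff_position_less_length)
  then show ?thesis using a b by (simp add: nth_position)
qed

fun encloses :: "'a list \<Rightarrow> 'a \<times> 'a \<Rightarrow> 'a \<times> 'a \<Rightarrow> bool" where
  "encloses xs (p', q') (p, q) \<longleftrightarrow>
     position xs p' \<le> position xs p \<and> position xs p \<le> position xs q \<and>
     position xs q \<le> position xs q' \<and> position xs q' < length xs"

lemma abs_diff_le_if_encloses:
  fixes x :: "'a \<Rightarrow> 'b::linordered_idom"
  assumes sorted: "sorted_wrt (\<lambda>a b. x a < x b) xs" and enc: "encloses xs (p', q') (p, q)"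
  shows "\<bar>x p - x q\<bar> \<le> \<bar>x p' - x q'\<bar>"
proof -
  have "{p', p, q, q'} \<subseteq> set xs"
    using enc by (auto simp: in_set_iff_position_less_length)
  then have "x p' \<le> x p" "x p \<le> x q" "x q \<le> x q'"
    using sorted enc by (auto intro: le_if_position_le)
  then show ?thesis by simp
qed

lemma prod_le_prod_matching:
  fixes f g :: "'a \<Rightarrow> 'b::linordered_semidom"
  assumes "distinct (map fst ps)" "distinct (map snd ps)"
    and "\<And>a b. (a, b) \<in> set ps \<Longrightarrow> 0 \<le> f a \<and> f a \<le> g b"
  shows "prod f (fst ` set ps) \<le> prod g (snd ` set ps)"
proof -
  have "prod f (fst ` set ps) = (\<Prod>p\<in>set ps. f (fst p))"
    using assms(1) by (simp add: distinct_map prod.reindex)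
  also have "\<dots> \<le> (\<Prod>p\<in>set ps. g (snd p))"
    using assms(3) by (intro prod_mono) auto
  also have "\<dots> = prod g (snd ` set ps)"
    using assms(2) by (simp add: distinct_map prod.reindex)
  finally show ?thesis .
qed

definition numer_gaps :: "(nat \<times> nat) set" where
  "numer_gaps = {(0,1), (2,3), (3,4), (5,6)}"

definition denom_gaps :: "(nat \<times> nat) set" where
  "denom_gaps = {(1,2), (4,5), (0,3), (3,6)}"

fun label_gap :: "color \<times> nat \<times> nat \<Rightarrow> label \<times> label" where
  "label_gap (c, i, j) = ((c, i), (c, j))"

definition gap_matching :: "((color \<times> nat \<times> nat) \<times> (color \<times> nat \<times> nat)) list" where
  "gap_matching =
    [((G,0,1), (G,0,3)), ((G,2,3), (B,1,2)), ((G,3,4), (G,3,6)), ((G,5,6), (M,1,2)),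
     ((R,0,1), (G,1,2)), ((R,2,3), (B,4,5)), ((R,3,4), (R,3,6)), ((R,5,6), (Y,1,2)),
     ((B,0,1), (R,1,2)), ((B,2,3), (M,4,5)), ((B,3,4), (R,0,3)), ((B,5,6), (Y,4,5)),
     ((M,0,1), (G,4,5)), ((M,2,3), (M,0,3)), ((M,3,4), (B,0,3)), ((M,5,6), (M,3,6)),
     ((Y,0,1), (R,4,5)), ((Y,2,3), (Y,0,3)), ((Y,3,4), (B,3,6)), ((Y,5,6), (Y,3,6))]"

lemma fst_gap_matching: "fst ` set gap_matching = {G, R, B, M, Y} \<times> numer_gaps"
  unfolding gap_matching_def numer_gaps_def by auto

lemma snd_gap_matching: "snd ` set gap_matching = {G, R, B, M, Y} \<times> denom_gaps"
  unfolding gap_matching_def denom_gaps_def by auto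

lemma distinct_gap_matching: "distinct (map fst gap_matching)" "distinct (map snd gap_matching)"
  unfolding gap_matching_def by simp_all

lemma gap_matching_encloses:
  "\<forall>(a, b) \<in> set gap_matching. encloses label_order (label_gap b) (label_gap a)"
  unfolding gap_matching_def by (simp add: label_order_def)

lemma prod_numer_gaps_le_prod_denom_gaps:
  assumes "sorted_wrt (\<lambda>a b. x a < x b) label_order"
  shows "(\<Prod>c\<in>{G, R, B, M, Y}. \<Prod>(i, j)\<in>numer_gaps. dist_c x c i j)
           \<le> (\<Prod>c\<in>{G, R, B, M, Y}. \<Prod>(i, j)\<in>denom_gaps. dist_c x c i j)"
proof -
  let ?gap = "\<lambda>(c, i, j). dist_c x c i j"
  have "(\<Prod>c\<in>{G, R, B, M, Y}. \<Prod>(i, j)\<in>numer_gaps. dist_c x c i j)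
          = prod ?gap (fst ` set gap_matching)"
    by (simp add: fst_gap_matching prod.cartesian_product)
  also have "\<dots> \<le> prod ?gap (snd ` set gap_matching)"
  proof (rule prod_le_prod_matching[OF distinct_gap_matching])
    fix a b assume "(a, b) \<in> set gap_matching"
    then have "encloses label_order (label_gap b) (label_gap a)"
      using gap_matching_encloses by blast
    then show "0 \<le> ?gap a \<and> ?gap a \<le> ?gap b"
      using abs_diff_le_if_encloses[OF assms] by (auto simp: dist_c_def split: prod.splits)
  qed
  also have "\<dots> = (\<Prod>c\<in>{G, R, B, M, Y}. \<Prod>(i, j)\<in>denom_gaps. dist_c x c i j)"
    by (simp add: snd_gap_matching prod.cartesian_product)
  finally show ?thesis .
qed

theorem lemma4:
  fixes x :: "label \<Rightarrow> real"
  assumes "sorted_wrt (\<lambda>a b. x a < x b) label_order"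
  shows "\<exists>c \<in> {G, R, B, M, Y}.
           \<not> (dist_c x c 0 1 * dist_c x c 2 3 * dist_c x c 3 4 * dist_c x c 5 6
                > dist_c x c 1 2 * dist_c x c 4 5 * dist_c x c 0 3 * dist_c x c 3 6)"
proof (rule ccontr)
  define numer where "numer c = (\<Prod>(i, j)\<in>numer_gaps. dist_c x c i j)" for c
  define denom where "denom c = (\<Prod>(i, j)\<in>denom_gaps. dist_c x c i j)" for c
  assume "\<not> ?thesis"
  then have less: "denom c < numer c" if "c \<in> {G, R, B, M, Y}" for c
    using that by (auto simp: numer_def denom_def numer_gaps_def denom_gaps_def mult_ac)
  have "prod denom {G, R, B, M, Y} < prod numer {G, R, B, M, Y}"
  proof (rule prod_mono_strict[of G])
    fix c assume c: "c \<in> {G, R, B, M, Y}"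
    have "0 \<le> denom c"
      by (auto simp: denom_def dist_c_def intro: prod_nonneg)
    then show "0 \<le> denom c \<and> denom c \<le> numer c" "0 < numer c"
      using less[OF c] by auto
  qed (use less in auto)
  then show False
    using prod_numer_gaps_le_prod_denom_gaps[OF assms] by (simp add: numer_def denom_def)
qed

end
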